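(* Let $(\Delta,\mathcal H)$ be a generic cut with associated simplicial complexes $K_\Delta,K_+,K_-$ on $\widetilde{[m]}=[m]\cup\{o\}$. Then $K_\Delta$ is the strong connected sum $K_+\#^ZK_-$, where $Z=O_{K_+\cup K_-}(o)$.
   Context: Let $\Delta\subset\mathbb R^n$ be an $n$-dimensional simple polytope $\Delta=\{x:\langle x,\lambda_i\rangle+\eta_i\ge0,\ i=1,\dots,m\}$ whose facets $H_i=\Delta\cap\{\langle x,\lambda_i\rangle+\eta_i=0\}$ are all nonempty. A generic cut is a hyperplane $\mathcal H=\{\langle x,\lambda_0\rangle+\xi=0\}$ in general position with the hyperplanes $\{\langle x,\lambda_i\rangle+\eta_i=0\}$ and with $H_o:=\mathcal H\cap\Delta\neq\varnothing$. Set $\Delta_\pm=\Delta\cap\{\pm(\langle x,\lambda_0\rangle+\xi)\ge0\}$, $K_\Delta=\{\sigma\subset[m]:\bigcap_{i\in\sigma}H_i\ne\varnothing\}\cup\{\varnothing\}$, $K_\pm=\{\sigma\subset\widetilde{[m]}:\bigcap_{i\in\sigma}(H_i\cap\Delta_\pm)\ne\varnothing\}\cup\{\varnothing\}$. Simplicial-complex notation: for $Z\subset K$, $\overline Z$ is the smallest subcomplex containing $Z$; $O_K(Z)=\{\sigma\in K:\sigma\supseteq\tau$ for some $\tau\in Z\}$; $O_K(o)=O_K(\{\{o\}\})$; $\operatorname{Del}_Z(K)=K\setminus O_K(Z)$. A complex is pure if all maximal faces have the same dimension. Connected sum: for simplicial complexes $K_1,K_2$ on the same vertex set and $Z\subset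 K_1\cap K_2$ with $\varnothing\notin Z$ and $O_{K_1\cup K_2}(Z)\subset K_1\cap K_2$, $K_1\#^ZK_2:=\operatorname{Del}_Z(K_1\cup K_2)$. It is strong if $K_1,K_2,W:=K_1\cap K_2$ are pure of the same dimension and $Z=W\setminus\overline{K_1\setminus W}=W\setminus\overline{K_2\setminus W}$. *)

theory Defs
  imports "HOL-Analysis.Analysis"
begin

text \<open>Conventions: the index set [m] is {1..m}; the extra vertex o is the index 0,
  so the extended vertex set is {0..m}.  The polytope is given by normals lam i and
  constants eta i for i in {1..m}; the cut hyperplane is given by lam 0 and eta 0
  (i.e. lambda_0 and xi).\<close>

definition Poly :: "nat \<Rightarrow> (nat \<Rightarrow> 'a::euclidean_space) \<Rightarrow> (nat \<Rightarrow> real) \<Rightarrow> 'a set" where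
  "Poly m lam eta = {x. \<forall>i\<in>{1..m}. x \<bullet> lam i + eta i \<ge> 0}"

definition Hyp :: "(nat \<Rightarrow> 'a::euclidean_space) \<Rightarrow> (nat \<Rightarrow> real) \<Rightarrow> nat \<Rightarrow> 'a set" where
  "Hyp lam eta i = {x. x \<bullet> lam i + eta i = 0}"

definition Facet :: "nat \<Rightarrow> (nat \<Rightarrow> 'a::euclidean_space) \<Rightarrow> (nat \<Rightarrow> real) \<Rightarrow> nat \<Rightarrow> 'a set" where
  "Facet m lam eta i = Poly m lam eta \<inter> Hyp lam eta i"

definition simple_polytope :: "nat \<Rightarrow> (nat \<Rightarrow> 'a::euclidean_space) \<Rightarrow> (nat \<Rightarrow> real) \<Rightarrow> bool" where
  "simple_polytope m lam eta \<longleftrightarrow>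
     polytope (Poly m lam eta) \<and> aff_dim (Poly m lam eta) = int DIM('a) \<and>
     (\<forall>v. v extreme_point_of (Poly m lam eta) \<longrightarrow>
          card {i\<in>{1..m}. v \<in> Facet m lam eta i} = DIM('a)) \<and>
     (\<forall>i\<in>{1..m}. Facet m lam eta i \<noteq> {})"

definition generic_cut :: "nat \<Rightarrow> (nat \<Rightarrow> 'a::euclidean_space) \<Rightarrow> (nat \<Rightarrow> real) \<Rightarrow> bool" where
  "generic_cut m lam eta \<longleftrightarrow>
     (\<forall>\<sigma>. \<sigma> \<subseteq> {1..m} \<longrightarrow>
        (let L = (\<Inter>i\<in>\<sigma>. Hyp lam eta i) in
          L \<noteq> {} \<longrightarrow> (Hyp lam eta 0 \<inter> L = {} \<or> aff_dim (Hyp lam eta 0 \<inter> L) = aff_dim L - 1))) \<and>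
     Facet m lam eta 0 \<noteq> {}"

text \<open>Delta_+ (s = 1) and Delta_- (s = -1).\<close>
definition Half :: "nat \<Rightarrow> (nat \<Rightarrow> 'a::euclidean_space) \<Rightarrow> (nat \<Rightarrow> real) \<Rightarrow> real \<Rightarrow> 'a set" where
  "Half m lam eta s = Poly m lam eta \<inter> {x. s * (x \<bullet> lam 0 + eta 0) \<ge> 0}"

definition K_Delta :: "nat \<Rightarrow> (nat \<Rightarrow> 'a::euclidean_space) \<Rightarrow> (nat \<Rightarrow> real) \<Rightarrow> nat set set" where
  "K_Delta m lam eta = {\<sigma>. \<sigma> \<subseteq> {1..m} \<and> (\<Inter>i\<in>\<sigma>. Facet m lam eta i) \<noteq> {}} \<union> {{}}"

definition K_half :: "nat \<Rightarrow> (nat \<Rightarrow> 'a::euclidean_space) \<Rightarrow> (nat \<Rightarrow> real) \<Rightarrow> real \<Rightarrow> nat set set" where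
  "K_half m lam eta s = {\<sigma>. \<sigma> \<subseteq> {0..m} \<and> (\<Inter>i\<in>\<sigma>. Facet m lam eta i \<inter> Half m lam eta s) \<noteq> {}} \<union> {{}}"

definition simplicial_complex :: "'v set \<Rightarrow> 'v set set \<Rightarrow> bool" where
  "simplicial_complex V K \<longleftrightarrow> finite V \<and> {} \<in> K \<and> (\<forall>\<sigma>\<in>K. \<sigma> \<subseteq> V) \<and>
     (\<forall>\<sigma>\<in>K. \<forall>\<tau>. \<tau> \<subseteq> \<sigma> \<longrightarrow> \<tau> \<in> K)"

definition sc_closure :: "'v set set \<Rightarrow> 'v set set" where
  "sc_closure Z = {\<tau>. \<exists>\<sigma>\<in>Z. \<tau> \<subseteq> \<sigma>}"

definition sc_O :: "'v set set \<Rightarrow> 'v set set \<Rightarrow> 'v set set" where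
  "sc_O K Z = {\<sigma>\<in>K. \<exists>\<tau>\<in>Z. \<tau> \<subseteq> \<sigma>}"

definition sc_Del :: "'v set set \<Rightarrow> 'v set set \<Rightarrow> 'v set set" where
  "sc_Del Z K = K - sc_O K Z"

definition maximal_face :: "'v set set \<Rightarrow> 'v set \<Rightarrow> bool" where
  "maximal_face K \<sigma> \<longleftrightarrow> \<sigma> \<in> K \<and> \<not> (\<exists>\<tau>\<in>K. \<sigma> \<subset> \<tau>)"

text \<open>pure of dimension d - 1: all maximal faces have d vertices\<close>
definition pure_card :: "'v set set \<Rightarrow> nat \<Rightarrow> bool" where
  "pure_card K d \<longleftrightarrow> (\<forall>\<sigma>. maximal_face K \<sigma> \<longrightarrow> card \<sigma> = d)"

definition connected_sum :: "'v set set \<Rightarrow> 'v set set \<Rightarrow> 'v set set \<Rightarrow> 'v set set" where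
  "connected_sum K1 Z K2 = sc_Del Z (K1 \<union> K2)"

definition connected_sum_defined :: "'v set \<Rightarrow> 'v set set \<Rightarrow> 'v set set \<Rightarrow> 'v set set \<Rightarrow> bool" where
  "connected_sum_defined V K1 Z K2 \<longleftrightarrow>
     simplicial_complex V K1 \<and> simplicial_complex V K2 \<and>
     Z \<subseteq> K1 \<inter> K2 \<and> {} \<notin> Z \<and> sc_O (K1 \<union> K2) Z \<subseteq> K1 \<inter> K2"

definition strong_connected_sum :: "'v set \<Rightarrow> 'v set set \<Rightarrow> 'v set set \<Rightarrow> 'v set set \<Rightarrow> bool" where
  "strong_connected_sum V K1 Z K2 \<longleftrightarrow>
     connected_sum_defined V K1 Z K2 \<and>
     (let W = K1 \<inter> K2 in
       (\<exists>d. pure_card K1 d \<and> pure_card K2 d \<and> pure_card W d) \<and>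
       Z = W - sc_closure (K1 - W) \<and> Z = W - sc_closure (K2 - W))"

end

theory Submission
  imports Defs
begin

(* Faces of K_+ and K_- are the index sets of constraints simultaneously active at a point of
   Delta_+ or Delta_-, so each face lies below the active set of an extreme point, and the active
   normals of an extreme point span R^n.  Genericity keeps the cut away from points cut out by
   spanning facet normals, so an extreme point off the cut is a vertex of Delta (n active facets)
   and one on the cut has fewer than n active facets: either way exactly n active constraints, so
   K_+ and K_- are pure.  A face common to both is active at a point of Delta_+ and at a point of
   Delta_-, hence where the segment joining them crosses the cut; so o can always be added, and W
   is pure.  Faces containing o lie in W, while a face of K_+- avoiding o lies (Krein-Milman, applied
   to the corresponding face of Delta) below a vertex of Delta strictly on the +- side, whose active
   set lies in K_+- only.  Hence Z = W minus the closure of K_+- - W, and deleting Z from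
   K_+ \<union> K_- leaves the faces avoiding o, which are those of K_Delta. *)

section \<open>Polyhedra given by weighted linear inequalities\<close>

lemma inner_affine_combination:
  "((1 - u) *\<^sub>R a + u *\<^sub>R b) \<bullet> l + e = (1 - u) * (a \<bullet> l + e) + u * (b \<bullet> l + e)"
  by (simp add: inner_add_left algebra_simps)

lemma tight_endpoints_if_tight_between:
  fixes a b :: "'a::real_inner"
  assumes "0 \<le> c * (a \<bullet> l + e)" "0 \<le> c * (b \<bullet> l + e)" "c \<noteq> 0" "0 < u" "u < 1"
    and "((1 - u) *\<^sub>R a + u *\<^sub>R b) \<bullet> l + e = 0"
  shows "a \<bullet> l + e = 0" "b \<bullet> l + e = 0"
proof -
  have "(1 - u) * (a \<bullet> l + e) + u * (b \<bullet> l + e) = 0"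
    using assms(6) by (simp only: inner_affine_combination)
  then have "(1 - u) * (c * (a \<bullet> l + e)) + u * (c * (b \<bullet> l + e)) = 0"
    by (metis distrib_left mult.left_commute mult_zero_right)
  moreover have "0 \<le> (1 - u) * (c * (a \<bullet> l + e))" "0 \<le> u * (c * (b \<bullet> l + e))"
    using assms by simp_all
  ultimately have "(1 - u) * (c * (a \<bullet> l + e)) = 0" "u * (c * (b \<bullet> l + e)) = 0"
    by linarith+
  then show "a \<bullet> l + e = 0" "b \<bullet> l + e = 0"
    using assms(3-5) by simp_all
qed

lemma eq_if_tight_on_spanning:
  assumes "span (lam ` \<sigma>) = UNIV"
    and "\<forall>j\<in>\<sigma>. x \<bullet> lam j + eta j = 0" "\<forall>j\<in>\<sigma>. y \<bullet> lam j + eta j = 0"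
  shows "y = x"
proof -
  have "orthogonal (y - x) v" if "v \<in> lam ` \<sigma>" for v
    using that assms(2,3) by (auto simp: orthogonal_def inner_diff_left) (metis add_right_cancel)
  then have "orthogonal (y - x) (y - x)"
    using orthogonal_to_span assms(1) by blast
  then show ?thesis
    by (simp add: orthogonal_def)
qed

(* The weights c allow the same description of Delta (all weights 1) and of Delta_+- (weight +-1 on
   the cut constraint, with index 0). *)
definition ineq_set :: "nat set \<Rightarrow> (nat \<Rightarrow> 'a::euclidean_space) \<Rightarrow> (nat \<Rightarrow> real) \<Rightarrow> (nat \<Rightarrow> real) \<Rightarrow> 'a set"
  where "ineq_set J lam eta c = {y. \<forall>j\<in>J. 0 \<le> c j * (y \<bullet> lam j + eta j)}"

lemma constraint_eq_scaled:
  "c * (y \<bullet> l + e) = c * e + (c *\<^sub>R l) \<bullet> y"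
  by (simp add: inner_commute algebra_simps)

lemma ineq_set_eq_halfspaces:
  "ineq_set J lam eta c = (\<Inter>j\<in>J. {y. (c j *\<^sub>R lam j) \<bullet> y \<ge> - (c j * eta j)})"
proof -
  have "0 \<le> c j * (y \<bullet> lam j + eta j) \<longleftrightarrow> - (c j * eta j) \<le> (c j *\<^sub>R lam j) \<bullet> y" for y j
    by (simp only: constraint_eq_scaled) arith
  then show ?thesis
    unfolding ineq_set_def by blast
qed

lemma closed_ineq_set: "closed (ineq_set J lam eta c)"
  unfolding ineq_set_eq_halfspaces by (intro closed_INT ballI closed_halfspace_ge)

lemma convex_ineq_set: "convex (ineq_set J lam eta c)"
  unfolding ineq_set_eq_halfspaces by (intro convex_INT ballI convex_halfspace_ge)

lemma closed_Hyp: "closed (Hyp lam eta j)"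
  unfolding Hyp_def by (intro closed_Collect_eq continuous_intros)

lemma face_of_ineq_set_Hyp:
  assumes "j \<in> J" "c j \<noteq> 0"
  shows "(ineq_set J lam eta c \<inter> Hyp lam eta j) face_of ineq_set J lam eta c"
proof -
  have "y \<bullet> lam j + eta j = 0 \<longleftrightarrow> (c j *\<^sub>R lam j) \<bullet> y = - (c j * eta j)" for y
    using assms(2) constraint_eq_scaled[of "c j" y "lam j" "eta j"] by (auto simp del: inner_scaleR_left)
  then have hyp: "ineq_set J lam eta c \<inter> Hyp lam eta j
      = ineq_set J lam eta c \<inter> {y. (c j *\<^sub>R lam j) \<bullet> y = - (c j * eta j)}"
    by (auto simp: Hyp_def simp del: inner_scaleR_left)
  have "(ineq_set J lam eta c \<inter> {y. (c j *\<^sub>R lam j) \<bullet> y = - (c j * eta j)}) face_of ineq_set J lam eta c"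
    using assms(1)
    by (intro face_of_Int_supporting_hyperplane_ge convex_ineq_set)
      (auto simp: ineq_set_eq_halfspaces simp del: inner_scaleR_left)
  then show ?thesis
    by (simp only: hyp)
qed

lemma face_of_ineq_set_tight:
  assumes "\<sigma> \<subseteq> J" "\<forall>j\<in>\<sigma>. c j \<noteq> 0"
  shows "(ineq_set J lam eta c \<inter> (\<Inter>j\<in>\<sigma>. Hyp lam eta j)) face_of ineq_set J lam eta c"
proof (cases "\<sigma> = {}")
  case True
  then show ?thesis by (simp add: face_of_refl convex_ineq_set)
next
  case False
  have "ineq_set J lam eta c \<inter> (\<Inter>j\<in>\<sigma>. Hyp lam eta j) = \<Inter> ((\<lambda>j. ineq_set J lam eta c \<inter> Hyp lam eta j) ` \<sigma>)"
    using False by auto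
  moreover have faces: "(ineq_set J lam eta c \<inter> Hyp lam eta j) face_of ineq_set J lam eta c"
    if "j \<in> \<sigma>" for j
    using that assms by (intro face_of_ineq_set_Hyp) auto
  have "\<Inter> ((\<lambda>j. ineq_set J lam eta c \<inter> Hyp lam eta j) ` \<sigma>) face_of ineq_set J lam eta c"
    by (rule face_of_Inter) (use False faces in auto)
  ultimately show ?thesis
    by simp
qed

lemma ineq_set_perturbation:
  assumes "finite J" "x \<in> ineq_set J lam eta c"
    and "\<And>j. j \<in> J \<Longrightarrow> x \<bullet> lam j + eta j = 0 \<Longrightarrow> d \<bullet> lam j = 0"
  obtains e where "e > 0" "\<And>t. \<bar>t\<bar> < e \<Longrightarrow> x + t *\<^sub>R d \<in> ineq_set J lam eta c"
proof -
  have shift: "(x + t *\<^sub>R d) \<bullet> lam j + eta j = (x \<bullet> lam j + eta j) + t * (d \<bullet> lam j)" for t j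
    by (simp add: inner_add_left algebra_simps)
  have "eventually (\<lambda>t. 0 \<le> c j * ((x + t *\<^sub>R d) \<bullet> lam j + eta j)) (nhds 0)" if "j \<in> J" for j
  proof (cases "x \<bullet> lam j + eta j = 0 \<or> c j = 0")
    case True
    then show ?thesis using assms(3) that by (auto simp: shift)
  next
    case False
    have "0 < c j * (x \<bullet> lam j + eta j)"
      using False assms(2) that by (auto simp: ineq_set_def less_le)
    moreover have "((\<lambda>t. c j * ((x \<bullet> lam j + eta j) + t * (d \<bullet> lam j)))
        \<longlongrightarrow> c j * ((x \<bullet> lam j + eta j) + 0 * (d \<bullet> lam j))) (nhds 0)"
      by (intro tendsto_intros) (rule filterlim_ident)
    ultimately have "eventually (\<lambda>t. 0 < c j * ((x \<bullet> lam j + eta j) + t * (d \<bullet> lam j))) (nhds 0)"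
      by (simp add: order_tendstoD(1))
    then show ?thesis
      unfolding shift by (rule eventually_mono) simp
  qed
  then have "eventually (\<lambda>t. x + t *\<^sub>R d \<in> ineq_set J lam eta c) (nhds 0)"
    using assms(1) by (auto simp: ineq_set_def intro: eventually_ball_finite)
  then show ?thesis
    using that by (auto simp: eventually_nhds_metric dist_real_def)
qed

lemma span_active_if_extreme_point:
  assumes "finite J" "x extreme_point_of ineq_set J lam eta c"
  shows "span (lam ` {j\<in>J. x \<bullet> lam j + eta j = 0}) = UNIV"
proof (rule ccontr)
  assume "span (lam ` {j\<in>J. x \<bullet> lam j + eta j = 0}) \<noteq> UNIV"
  then obtain d where d: "d \<noteq> 0" "\<And>v. v \<in> span (lam ` {j\<in>J. x \<bullet> lam j + eta j = 0}) \<Longrightarrow> d \<bullet> v = 0"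
    using span_not_UNIV_orthogonal by blast
  have "x \<in> ineq_set J lam eta c"
    using assms(2) by (simp add: extreme_point_of_def)
  moreover have "d \<bullet> lam j = 0" if "j \<in> J" "x \<bullet> lam j + eta j = 0" for j
    using d(2) that by (auto intro: span_base)
  ultimately obtain e where e: "e > 0" "\<And>t. \<bar>t\<bar> < e \<Longrightarrow> x + t *\<^sub>R d \<in> ineq_set J lam eta c"
    using ineq_set_perturbation[OF assms(1)] by blast
  let ?a = "x + (- e / 2) *\<^sub>R d" and ?b = "x + (e / 2) *\<^sub>R d"
  have ends: "?a \<in> ineq_set J lam eta c" "?b \<in> ineq_set J lam eta c"
    by (rule e(2), use e(1) in simp)+
  have "?a \<noteq> ?b"
    using d(1) e(1) by (auto simp: neg_eq_iff_add_eq_0 simp flip: scaleR_add_left)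
  then have "midpoint ?a ?b \<in> open_segment ?a ?b"
    by simp
  moreover have "?a + ?b = 2 *\<^sub>R x"
    by (simp add: scaleR_2 algebra_simps)
  then have "midpoint ?a ?b = x"
    by (simp add: midpoint_def)
  ultimately have "x \<in> open_segment ?a ?b"
    by metis
  with ends assms(2) show False
    unfolding extreme_point_of_def by blast
qed

lemma extreme_point_if_span_active:
  assumes "\<forall>j\<in>J. c j \<noteq> 0" "x \<in> ineq_set J lam eta c"
    and "span (lam ` {j\<in>J. x \<bullet> lam j + eta j = 0}) = UNIV"
  shows "x extreme_point_of ineq_set J lam eta c"
  unfolding extreme_point_of_def
proof (intro conjI assms ballI notI)
  fix a b
  assume ab: "a \<in> ineq_set J lam eta c" "b \<in> ineq_set J lam eta c" and "x \<in> open_segment a b"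
  then obtain u where u: "a \<noteq> b" "0 < u" "u < 1" "x = (1 - u) *\<^sub>R a + u *\<^sub>R b"
    by (auto simp: in_segment)
  have "a \<bullet> lam j + eta j = 0" "b \<bullet> lam j + eta j = 0"
    if "j \<in> J" "x \<bullet> lam j + eta j = 0" for j
    using tight_endpoints_if_tight_between[of "c j" a "lam j" "eta j" b u] ab that assms(1) u
    by (auto simp: ineq_set_def)
  then have "a = b"
    by (intro eq_if_tight_on_spanning[OF assms(3)]) auto
  with u show False by simp
qed

lemma extreme_point_tight_exists:
  assumes "compact (ineq_set J lam eta c)" "\<sigma> \<subseteq> J" "\<forall>j\<in>\<sigma>. c j \<noteq> 0"
    and "y \<in> ineq_set J lam eta c" "\<forall>j\<in>\<sigma>. y \<bullet> lam j + eta j = 0"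
  obtains x where "x extreme_point_of ineq_set J lam eta c" "\<forall>j\<in>\<sigma>. x \<bullet> lam j + eta j = 0"
proof -
  let ?F = "ineq_set J lam eta c \<inter> (\<Inter>j\<in>\<sigma>. Hyp lam eta j)"
  have face: "?F face_of ineq_set J lam eta c"
    using assms(2,3) by (rule face_of_ineq_set_tight)
  have "compact ?F"
    using assms(1) by (auto intro!: compact_Int_closed closed_INT closed_Hyp)
  moreover have "?F \<noteq> {}"
    using assms(4,5) by (auto simp: Hyp_def)
  ultimately obtain x where "x extreme_point_of ?F"
    using extreme_point_exists_convex face_of_imp_convex[OF face] by blast
  then show ?thesis
    using that extreme_point_of_face[OF face] by (auto simp: Hyp_def)
qed

lemma extreme_point_in_halfspace_exists:
  fixes S :: "'a::euclidean_space set"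
  assumes "compact S" "convex S" "y \<in> S" "b \<le> a \<bullet> y"
  obtains p where "p extreme_point_of S" "b \<le> a \<bullet> p"
proof -
  have "\<exists>p. p extreme_point_of S \<and> b \<le> a \<bullet> p"
  proof (rule ccontr)
    assume "\<nexists>p. p extreme_point_of S \<and> b \<le> a \<bullet> p"
    then have "{p. p extreme_point_of S} \<subseteq> {p. a \<bullet> p < b}"
      by (auto simp: not_le)
    then have "convex hull {p. p extreme_point_of S} \<subseteq> {p. a \<bullet> p < b}"
      by (intro hull_minimal convex_halfspace_lt)
    then show False
      using Krein_Milman_Minkowski[OF assms(1,2)] assms(3,4) by auto
  qed
  then show ?thesis
    using that by blast
qed

lemma sc_O_vertex: "sc_O K {{v}} = {\<sigma>\<in>K. v \<in> \<sigma>}"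
  by (auto simp: sc_O_def)

lemma connected_sum_vertex_star:
  "connected_sum K1 {\<sigma>\<in>K1 \<union> K2. v \<in> \<sigma>} K2 = {\<sigma>\<in>K1 \<union> K2. v \<notin> \<sigma>}"
  by (auto simp: connected_sum_def sc_Del_def sc_O_def)

definition active :: "nat \<Rightarrow> (nat \<Rightarrow> 'a::euclidean_space) \<Rightarrow> (nat \<Rightarrow> real) \<Rightarrow> 'a \<Rightarrow> nat set"
  where "active m lam eta x = {j\<in>{0..m}. x \<bullet> lam j + eta j = 0}"

lemma subset_atLeast1_iff: "\<sigma> \<subseteq> {1..m} \<longleftrightarrow> 0 \<notin> \<sigma> \<and> \<sigma> \<subseteq> {0..m::nat}"
  by (auto simp: subset_iff Suc_le_eq) (metis gr0I)

lemma active_facets_eq: "active m lam eta x - {0} = {j\<in>{1..m}. x \<bullet> lam j + eta j = 0}"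
  by (auto simp: active_def)

lemma subset_active_iff:
  "\<sigma> \<subseteq> active m lam eta x \<longleftrightarrow> \<sigma> \<subseteq> {0..m} \<and> (\<forall>j\<in>\<sigma>. x \<bullet> lam j + eta j = 0)"
  by (auto simp: active_def)

lemma active_closed_segment:
  assumes "w \<in> closed_segment y z"
  shows "active m lam eta y \<inter> active m lam eta z \<subseteq> active m lam eta w"
  using assms by (auto simp: active_def in_segment inner_affine_combination)

lemma Poly_eq_ineq_set: "Poly m lam eta = ineq_set {1..m} lam eta (\<lambda>_. 1)"
  by (auto simp: Poly_def ineq_set_def)

lemma Half_eq_ineq_set: "Half m lam eta s = ineq_set {0..m} lam eta (\<lambda>j. if j = 0 then s else 1)"
  by (auto simp: Half_def Poly_def ineq_set_def atLeast0AtMost Icc_eq_insert_lb_nat)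

lemma Half_subset_Poly: "Half m lam eta s \<subseteq> Poly m lam eta"
  by (auto simp: Half_def)

lemma Poly_eq_Un_Half: "Poly m lam eta = Half m lam eta 1 \<union> Half m lam eta (-1)"
  by (auto simp: Half_def)

lemma cut_point_in_Half: "x \<in> Poly m lam eta \<Longrightarrow> x \<bullet> lam 0 + eta 0 = 0 \<Longrightarrow> x \<in> Half m lam eta s"
  by (auto simp: Half_def)

section \<open>Generic cuts of simple polytopes\<close>

locale generic_cut_polytope =
  fixes m :: nat and lam :: "nat \<Rightarrow> 'a::euclidean_space" and eta :: "nat \<Rightarrow> real"
  assumes simple: "simple_polytope m lam eta" and generic: "generic_cut m lam eta"
begin

lemma compact_Poly: "compact (Poly m lam eta)"
  using simple by (auto simp: simple_polytope_def intro: polytope_imp_compact)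

lemma compact_Half: "compact (Half m lam eta s)"
proof -
  have "Half m lam eta s = Poly m lam eta \<inter> ineq_set {0..m} lam eta (\<lambda>j. if j = 0 then s else 1)"
    using Half_subset_Poly[of m lam eta s] by (simp add: Half_eq_ineq_set Int_absorb1)
  then show ?thesis
    by (simp add: compact_Int_closed compact_Poly closed_ineq_set)
qed

lemma cut_point_exists:
  obtains x where "x \<in> Poly m lam eta" "x \<bullet> lam 0 + eta 0 = 0"
  using generic by (auto simp: generic_cut_def Facet_def Hyp_def)

lemma Half_nonempty: "Half m lam eta s \<noteq> {}"
  by (metis cut_point_exists cut_point_in_Half empty_iff)

lemma K_half_eq: "K_half m lam eta s = {\<sigma>. \<exists>x\<in>Half m lam eta s. \<sigma> \<subseteq> active m lam eta x}"
proof -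
  have "\<sigma> \<in> K_half m lam eta s \<longleftrightarrow> (\<exists>x\<in>Half m lam eta s. \<sigma> \<subseteq> active m lam eta x)" for \<sigma>
  proof (cases "\<sigma> = {}")
    case True
    then show ?thesis using Half_nonempty by (auto simp: K_half_def)
  next
    case False
    then have "(\<Inter>i\<in>\<sigma>. Facet m lam eta i \<inter> Half m lam eta s)
        = {x\<in>Half m lam eta s. \<forall>i\<in>\<sigma>. x \<bullet> lam i + eta i = 0}"
      using Half_subset_Poly[of m lam eta s] by (auto simp: Facet_def Hyp_def)
    then show ?thesis
      by (auto simp: K_half_def subset_active_iff)
  qed
  then show ?thesis by blast
qed

lemma K_Delta_eq: "K_Delta m lam eta = {\<sigma>. 0 \<notin> \<sigma> \<and> (\<exists>x\<in>Poly m lam eta. \<sigma> \<subseteq> active m lam eta x)}"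
proof -
  have "\<sigma> \<in> K_Delta m lam eta \<longleftrightarrow> 0 \<notin> \<sigma> \<and> (\<exists>x\<in>Poly m lam eta. \<sigma> \<subseteq> active m lam eta x)" for \<sigma>
  proof (cases "\<sigma> = {}")
    case True
    then show ?thesis using cut_point_exists by (auto simp: K_Delta_def)
  next
    case False
    then have "(\<Inter>i\<in>\<sigma>. Facet m lam eta i) = {x\<in>Poly m lam eta. \<forall>i\<in>\<sigma>. x \<bullet> lam i + eta i = 0}"
      by (auto simp: Facet_def Hyp_def)
    then have "\<sigma> \<in> K_Delta m lam eta \<longleftrightarrow>
        \<sigma> \<subseteq> {1..m} \<and> (\<exists>x\<in>Poly m lam eta. \<forall>i\<in>\<sigma>. x \<bullet> lam i + eta i = 0)"
      using False unfolding K_Delta_def by auto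
    then show ?thesis
      unfolding subset_atLeast1_iff subset_active_iff by blast
  qed
  then show ?thesis by blast
qed

lemma card_active_vertex:
  assumes "x extreme_point_of Poly m lam eta"
  shows "card (active m lam eta x - {0}) = DIM('a)"
proof -
  have "x \<in> Poly m lam eta"
    using assms by (simp add: extreme_point_of_def)
  then have "{i\<in>{1..m}. x \<in> Facet m lam eta i} = active m lam eta x - {0}"
    by (auto simp: active_facets_eq Facet_def Hyp_def)
  moreover have "card {i\<in>{1..m}. x \<in> Facet m lam eta i} = DIM('a)"
    using simple assms unfolding simple_polytope_def by blast
  ultimately show ?thesis
    by simp
qed

lemma span_active_vertex:
  assumes "x extreme_point_of Poly m lam eta"
  shows "span (lam ` (active m lam eta x - {0})) = UNIV"
proof -
  have "x extreme_point_of ineq_set {1..m} lam eta (\<lambda>_. 1)"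
    using assms by (simp only: Poly_eq_ineq_set)
  then show ?thesis
    unfolding active_facets_eq by (rule span_active_if_extreme_point[OF finite_atLeastAtMost])
qed

lemma off_cut_if_spanning:
  assumes "\<sigma> \<subseteq> {1..m}" "span (lam ` \<sigma>) = UNIV" "\<forall>j\<in>\<sigma>. x \<bullet> lam j + eta j = 0"
  shows "x \<bullet> lam 0 + eta 0 \<noteq> 0"
proof
  assume on_cut: "x \<bullet> lam 0 + eta 0 = 0"
  have point: "(\<Inter>j\<in>\<sigma>. Hyp lam eta j) = {x}"
  proof (intro equalityI subsetI)
    fix y
    assume "y \<in> (\<Inter>j\<in>\<sigma>. Hyp lam eta j)"
    then show "y \<in> {x}"
      using eq_if_tight_on_spanning[OF assms(2,3), of y] by (simp add: Hyp_def)
  qed (use assms(3) in \<open>simp add: Hyp_def\<close>)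
  have "\<forall>\<sigma>. \<sigma> \<subseteq> {1..m} \<longrightarrow> (let L = \<Inter>j\<in>\<sigma>. Hyp lam eta j in
      L \<noteq> {} \<longrightarrow> Hyp lam eta 0 \<inter> L = {} \<or> aff_dim (Hyp lam eta 0 \<inter> L) = aff_dim L - 1)"
    using generic unfolding generic_cut_def by (rule conjunct1)
  from this[rule_format, OF assms(1)]
  have "Hyp lam eta 0 \<inter> {x} = {} \<or> aff_dim (Hyp lam eta 0 \<inter> {x}) = aff_dim {x} - 1"
    unfolding point Let_def by simp
  moreover have "Hyp lam eta 0 \<inter> {x} = {x}"
    using on_cut by (auto simp: Hyp_def)
  ultimately show False
    by simp
qed

lemma vertex_off_cut:
  assumes "x extreme_point_of Poly m lam eta"
  shows "x \<bullet> lam 0 + eta 0 \<noteq> 0"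
  by (rule off_cut_if_spanning[OF _ span_active_vertex[OF assms]]) (auto simp: active_def)

lemma span_active_extreme_point_Half:
  assumes "x extreme_point_of Half m lam eta s"
  shows "span (lam ` active m lam eta x) = UNIV"
proof -
  have "x extreme_point_of ineq_set {0..m} lam eta (\<lambda>j. if j = 0 then s else 1)"
    using assms by (simp only: Half_eq_ineq_set)
  then show ?thesis
    unfolding active_def by (rule span_active_if_extreme_point[OF finite_atLeastAtMost])
qed

lemma extreme_point_Half_off_cut:
  assumes "x extreme_point_of Half m lam eta s" "x \<bullet> lam 0 + eta 0 \<noteq> 0"
  shows "x extreme_point_of Poly m lam eta"
proof -
  have "active m lam eta x = active m lam eta x - {0}"
    using assms(2) by (auto simp: active_def)
  then have "span (lam ` {j\<in>{1..m}. x \<bullet> lam j + eta j = 0}) = UNIV"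
    using span_active_extreme_point_Half[OF assms(1)] by (simp add: active_facets_eq)
  moreover have "x \<in> Poly m lam eta"
    using assms(1) Half_subset_Poly[of m lam eta s] by (auto simp: extreme_point_of_def)
  ultimately show ?thesis
    unfolding Poly_eq_ineq_set by (intro extreme_point_if_span_active) auto
qed

lemma card_active_facets_on_cut:
  assumes "x \<in> Poly m lam eta" "x \<bullet> lam 0 + eta 0 = 0"
  shows "card (active m lam eta x - {0}) < DIM('a)"
proof -
  obtain v where v: "v extreme_point_of Poly m lam eta"
      "\<forall>j\<in>active m lam eta x - {0}. v \<bullet> lam j + eta j = 0"
  proof (rule extreme_point_tight_exists[of "{1..m}" lam eta "\<lambda>_. 1" "active m lam eta x - {0}" x])
    show "compact (ineq_set {1..m} lam eta (\<lambda>_. 1))"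
      using compact_Poly by (simp add: Poly_eq_ineq_set)
  qed (use assms(1) in \<open>auto simp: Poly_eq_ineq_set active_def\<close>)
  then have sub: "active m lam eta x - {0} \<subseteq> active m lam eta v - {0}"
    by (auto simp: active_def)
  have fin: "finite (active m lam eta v - {0})"
    by (simp add: active_def)
  have "card (active m lam eta x - {0}) \<le> DIM('a)"
    using card_mono[OF fin sub] card_active_vertex[OF v(1)] by simp
  moreover have "card (active m lam eta x - {0}) \<noteq> DIM('a)"
  proof
    assume "card (active m lam eta x - {0}) = DIM('a)"
    then have "active m lam eta x - {0} = active m lam eta v - {0}"
      using card_subset_eq[OF fin sub] card_active_vertex[OF v(1)] by simp
    then have "span (lam ` (active m lam eta x - {0})) = UNIV"
      using span_active_vertex[OF v(1)] by (simp only:)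
    then have "x \<bullet> lam 0 + eta 0 \<noteq> 0"
      by (rule off_cut_if_spanning[rotated]) (auto simp: active_def)
    with assms(2) show False
      by simp
  qed
  ultimately show ?thesis
    by simp
qed

lemma card_active_extreme_point_Half:
  assumes "x extreme_point_of Half m lam eta s"
  shows "card (active m lam eta x) = DIM('a)"
proof (cases "x \<bullet> lam 0 + eta 0 = 0")
  case False
  then have "active m lam eta x = active m lam eta x - {0}"
    by (auto simp: active_def)
  then show ?thesis
    using card_active_vertex[OF extreme_point_Half_off_cut[OF assms False]] by simp
next
  case True
  have fin: "finite (active m lam eta x)"
    by (simp add: active_def)
  have "DIM('a) \<le> card (lam ` active m lam eta x)"
    using dim_le_card[of UNIV "lam ` active m lam eta x"] span_active_extreme_point_Half[OF assms] fin
    by simp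
  also have "\<dots> \<le> card (active m lam eta x)"
    using card_image_le[OF fin] .
  finally have "DIM('a) \<le> card (active m lam eta x)" .
  moreover have "active m lam eta x = insert 0 (active m lam eta x - {0})"
    using True by (auto simp: active_def)
  moreover have "card (active m lam eta x - {0}) < DIM('a)"
    using card_active_facets_on_cut True assms Half_subset_Poly[of m lam eta s]
    by (auto simp: extreme_point_of_def)
  ultimately show ?thesis
    using fin by (metis card_insert_disjoint finite_Diff Diff_iff insertI1 Suc_leI le_antisym)
qed

lemma extreme_point_Half_above:
  assumes "s \<noteq> 0" "y \<in> Half m lam eta s" "\<sigma> \<subseteq> active m lam eta y"
  obtains x where "x extreme_point_of Half m lam eta s" "\<sigma> \<subseteq> active m lam eta x"
proof -
  let ?c = "\<lambda>j. if j = 0 then s else 1"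
  obtain x where "x extreme_point_of ineq_set {0..m} lam eta ?c" "\<forall>j\<in>\<sigma>. x \<bullet> lam j + eta j = 0"
  proof (rule extreme_point_tight_exists[of "{0..m}" lam eta ?c \<sigma> y])
    show "compact (ineq_set {0..m} lam eta ?c)"
      using compact_Half[of s] by (simp only: Half_eq_ineq_set)
  qed (use assms in \<open>auto simp: Half_eq_ineq_set subset_active_iff\<close>)
  then show ?thesis
    using that assms(3) by (auto simp: Half_eq_ineq_set subset_active_iff)
qed

lemma pure_K_half:
  assumes "s \<noteq> 0"
  shows "pure_card (K_half m lam eta s) DIM('a)"
  unfolding pure_card_def
proof (intro allI impI)
  fix \<sigma>
  assume max: "maximal_face (K_half m lam eta s) \<sigma>"
  then obtain y where "y \<in> Half m lam eta s" "\<sigma> \<subseteq> active m lam eta y"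
    by (auto simp: maximal_face_def K_half_eq)
  then obtain x where x: "x extreme_point_of Half m lam eta s" "\<sigma> \<subseteq> active m lam eta x"
    using extreme_point_Half_above[OF assms] by blast
  then have "active m lam eta x \<in> K_half m lam eta s"
    by (auto simp: K_half_eq extreme_point_of_def)
  then have "\<sigma> = active m lam eta x"
    using max x(2) by (auto simp: maximal_face_def)
  then show "card \<sigma> = DIM('a)"
    using card_active_extreme_point_Half[OF x(1)] by simp
qed

lemma active_on_cut_in_K_half:
  assumes "x \<in> Poly m lam eta" "x \<bullet> lam 0 + eta 0 = 0"
  shows "active m lam eta x \<in> K_half m lam eta s"
  using cut_point_in_Half[OF assms] by (auto simp: K_half_eq)

lemma K_half_swap_side:
  assumes "\<sigma> \<in> K_half m lam eta s" "0 \<in> \<sigma>"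
  shows "\<sigma> \<in> K_half m lam eta t"
proof -
  obtain x where x: "x \<in> Half m lam eta s" "\<sigma> \<subseteq> active m lam eta x"
    using assms(1) by (auto simp: K_half_eq)
  then have "x \<in> Poly m lam eta" "x \<bullet> lam 0 + eta 0 = 0"
    using assms(2) Half_subset_Poly[of m lam eta s] by (auto simp: active_def)
  then have "x \<in> Half m lam eta t"
    by (rule cut_point_in_Half)
  then show ?thesis
    using x(2) by (auto simp: K_half_eq)
qed

lemma cut_point_between_sides:
  assumes "y \<in> Half m lam eta 1" "z \<in> Half m lam eta (-1)"
  obtains w where "w \<in> Poly m lam eta" "w \<bullet> lam 0 + eta 0 = 0"
    "active m lam eta y \<inter> active m lam eta z \<subseteq> active m lam eta w"
proof -
  have "lam 0 \<bullet> z \<le> - eta 0" "- eta 0 \<le> lam 0 \<bullet> y"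
    using assms by (auto simp: Half_def inner_commute)
  then obtain w where w: "w \<in> closed_segment y z" "lam 0 \<bullet> w = - eta 0"
    using connected_ivt_hyperplane[OF connected_segment ends_in_segment(2) ends_in_segment(1)] by blast
  have "closed_segment y z \<subseteq> Poly m lam eta"
    using assms Half_subset_Poly convex_ineq_set
    by (metis Poly_eq_ineq_set closed_segment_subset subsetD)
  then show ?thesis
    using that w active_closed_segment[OF w(1)] by (auto simp: inner_commute)
qed

lemma insert_zero_K_half:
  assumes "\<sigma> \<in> K_half m lam eta 1" "\<sigma> \<in> K_half m lam eta (-1)"
  shows "insert 0 \<sigma> \<in> K_half m lam eta s"
proof -
  obtain y z where yz: "y \<in> Half m lam eta 1" "z \<in> Half m lam eta (-1)"
    and "\<sigma> \<subseteq> active m lam eta y" "\<sigma> \<subseteq> active m lam eta z"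
    using assms by (auto simp: K_half_eq)
  obtain w where w: "w \<in> Poly m lam eta" "w \<bullet> lam 0 + eta 0 = 0"
    and "active m lam eta y \<inter> active m lam eta z \<subseteq> active m lam eta w"
    by (rule cut_point_between_sides[OF yz])
  with \<open>\<sigma> \<subseteq> active m lam eta y\<close> \<open>\<sigma> \<subseteq> active m lam eta z\<close>
  have "insert 0 \<sigma> \<subseteq> active m lam eta w"
    by (auto simp: active_def)
  then show ?thesis
    using cut_point_in_Half[OF w] by (auto simp: K_half_eq)
qed

lemma pure_common_faces: "pure_card (K_half m lam eta 1 \<inter> K_half m lam eta (-1)) DIM('a)"
  unfolding pure_card_def
proof (intro allI impI)
  fix \<sigma>
  assume max: "maximal_face (K_half m lam eta 1 \<inter> K_half m lam eta (-1)) \<sigma>"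
  then have \<sigma>: "\<sigma> \<in> K_half m lam eta 1" "\<sigma> \<in> K_half m lam eta (-1)"
    by (auto simp: maximal_face_def)
  then have "insert 0 \<sigma> \<in> K_half m lam eta 1 \<inter> K_half m lam eta (-1)"
    by (simp add: insert_zero_K_half)
  then have "0 \<in> \<sigma>"
    using max by (auto simp: maximal_face_def)
  obtain y where "y \<in> Half m lam eta 1" "\<sigma> \<subseteq> active m lam eta y"
    using \<sigma>(1) by (auto simp: K_half_eq)
  then obtain x where x: "x extreme_point_of Half m lam eta 1" "\<sigma> \<subseteq> active m lam eta x"
    by (rule extreme_point_Half_above[OF one_neq_zero])
  then have "x \<in> Poly m lam eta" "x \<bullet> lam 0 + eta 0 = 0"
    using \<open>0 \<in> \<sigma>\<close> Half_subset_Poly[of m lam eta 1] by (auto simp: extreme_point_of_def active_def)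
  then have "active m lam eta x \<in> K_half m lam eta 1 \<inter> K_half m lam eta (-1)"
    by (simp add: active_on_cut_in_K_half)
  then have "\<sigma> = active m lam eta x"
    using max x(2) by (auto simp: maximal_face_def)
  then show "card \<sigma> = DIM('a)"
    using card_active_extreme_point_Half[OF x(1)] by simp
qed

lemma simplicial_complex_K_half: "simplicial_complex {0..m} (K_half m lam eta s)"
  unfolding simplicial_complex_def K_half_eq
  using Half_nonempty[of s] by (auto simp: active_def)

lemma vertex_above_off_cut_face:
  assumes "s \<noteq> 0" "\<sigma> \<in> K_half m lam eta s" "0 \<notin> \<sigma>"
  obtains p where "p extreme_point_of Poly m lam eta" "0 < s * (p \<bullet> lam 0 + eta 0)"
    "\<sigma> \<subseteq> active m lam eta p"
proof -
  obtain y where y: "y \<in> Half m lam eta s" "\<sigma> \<subseteq> active m lam eta y"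
    using assms(2) by (auto simp: K_half_eq)
  then have \<sigma>: "\<sigma> \<subseteq> {1..m}"
    using assms(3) unfolding subset_active_iff subset_atLeast1_iff by blast
  let ?F = "Poly m lam eta \<inter> (\<Inter>j\<in>\<sigma>. Hyp lam eta j)"
  have face: "?F face_of Poly m lam eta"
    using face_of_ineq_set_tight[of \<sigma> "{1..m}" "\<lambda>_. 1" lam eta] \<sigma> by (simp add: Poly_eq_ineq_set)
  have "compact ?F"
    using compact_Poly by (auto intro!: compact_Int_closed closed_INT closed_Hyp)
  moreover have "y \<in> ?F"
    using y Half_subset_Poly[of m lam eta s] by (auto simp: active_def Hyp_def)
  moreover have "- (s * eta 0) \<le> (s *\<^sub>R lam 0) \<bullet> y"
    using y(1) constraint_eq_scaled[of s y "lam 0" "eta 0"] by (simp add: Half_def del: inner_scaleR_left)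
  ultimately obtain p where p: "p extreme_point_of ?F" "- (s * eta 0) \<le> (s *\<^sub>R lam 0) \<bullet> p"
    using extreme_point_in_halfspace_exists face_of_imp_convex[OF face] by blast
  then have vertex: "p extreme_point_of Poly m lam eta" and "p \<in> ?F"
    using extreme_point_of_face[OF face] by auto
  have "0 \<le> s * (p \<bullet> lam 0 + eta 0)"
    using p(2) constraint_eq_scaled[of s p "lam 0" "eta 0"] by (simp del: inner_scaleR_left)
  moreover have "s * (p \<bullet> lam 0 + eta 0) \<noteq> 0"
    using assms(1) vertex_off_cut[OF vertex] by simp
  ultimately have "0 < s * (p \<bullet> lam 0 + eta 0)"
    by linarith
  moreover have "\<sigma> \<subseteq> active m lam eta p"
    using \<open>p \<in> ?F\<close> \<sigma> by (auto simp: active_def Hyp_def)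
  ultimately show ?thesis
    using that vertex by simp
qed

lemma active_vertex_not_in_K_half:
  assumes "p extreme_point_of Poly m lam eta" "0 < s * (p \<bullet> lam 0 + eta 0)"
  shows "active m lam eta p \<notin> K_half m lam eta (-s)"
proof
  assume "active m lam eta p \<in> K_half m lam eta (-s)"
  then obtain q where q: "q \<in> Half m lam eta (-s)" "active m lam eta p \<subseteq> active m lam eta q"
    by (auto simp: K_half_eq)
  have "q = p"
    by (rule eq_if_tight_on_spanning[OF span_active_vertex[OF assms(1)]])
      (use q(2) in \<open>auto simp: active_def\<close>)
  then show False
    using q(1) assms(2) by (auto simp: Half_def)
qed

lemma cut_star_eq:
  assumes "s \<noteq> 0"
  defines "W \<equiv> K_half m lam eta s \<inter> K_half m lam eta (-s)"
  shows "{\<sigma>\<in>K_half m lam eta s \<union> K_half m lam eta (-s). 0 \<in> \<sigma>}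
    = W - sc_closure (K_half m lam eta s - W)"
proof (intro equalityI subsetI)
  fix \<sigma>
  assume "\<sigma> \<in> {\<sigma>\<in>K_half m lam eta s \<union> K_half m lam eta (-s). 0 \<in> \<sigma>}"
  then have "0 \<in> \<sigma>" "\<sigma> \<in> W"
    unfolding W_def using K_half_swap_side by blast+
  moreover have "\<tau> \<in> W" if "\<tau> \<in> K_half m lam eta s" "\<sigma> \<subseteq> \<tau>" for \<tau>
    using that \<open>0 \<in> \<sigma>\<close> K_half_swap_side unfolding W_def by blast
  ultimately show "\<sigma> \<in> W - sc_closure (K_half m lam eta s - W)"
    by (auto simp: sc_closure_def)
next
  fix \<sigma>
  assume \<sigma>: "\<sigma> \<in> W - sc_closure (K_half m lam eta s - W)"
  have "0 \<in> \<sigma>"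
  proof (rule ccontr)
    assume "0 \<notin> \<sigma>"
    then obtain p where p: "p extreme_point_of Poly m lam eta" "0 < s * (p \<bullet> lam 0 + eta 0)"
      "\<sigma> \<subseteq> active m lam eta p"
      using vertex_above_off_cut_face[OF assms(1)] \<sigma> unfolding W_def by blast
    then have "active m lam eta p \<in> K_half m lam eta s"
      using p(2) by (auto simp: K_half_eq Half_def extreme_point_of_def)
    then have "active m lam eta p \<in> K_half m lam eta s - W"
      using active_vertex_not_in_K_half[OF p(1,2)] unfolding W_def by blast
    then show False
      using \<sigma> p(3) by (auto simp: sc_closure_def)
  qed
  then show "\<sigma> \<in> {\<sigma>\<in>K_half m lam eta s \<union> K_half m lam eta (-s). 0 \<in> \<sigma>}"
    using \<sigma> unfolding W_def by blast
qed

end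

theorem theorem3p9:
  fixes m :: nat and lam :: "nat \<Rightarrow> 'a::euclidean_space" and eta :: "nat \<Rightarrow> real"
  assumes "simple_polytope m lam eta"
    and "generic_cut m lam eta"
  shows "strong_connected_sum {0..m} (K_half m lam eta 1)
           (sc_O (K_half m lam eta 1 \<union> K_half m lam eta (-1)) {{0}}) (K_half m lam eta (-1))
       \<and> K_Delta m lam eta = connected_sum (K_half m lam eta 1)
           (sc_O (K_half m lam eta 1 \<union> K_half m lam eta (-1)) {{0}}) (K_half m lam eta (-1))"
proof -
  interpret generic_cut_polytope m lam eta
    using assms by (rule generic_cut_polytope.intro)
  let ?K1 = "K_half m lam eta 1" and ?K2 = "K_half m lam eta (-1)"
  let ?Z = "{\<sigma>\<in>?K1 \<union> ?K2. 0 \<in> \<sigma>}"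
  have "sc_O (?K1 \<union> ?K2) ?Z \<subseteq> ?K1 \<inter> ?K2"
    using K_half_swap_side by (auto simp: sc_O_def)
  then have "connected_sum_defined {0..m} ?K1 ?Z ?K2"
    using simplicial_complex_K_half by (auto simp: connected_sum_defined_def sc_O_def)
  moreover have "\<exists>d. pure_card ?K1 d \<and> pure_card ?K2 d \<and> pure_card (?K1 \<inter> ?K2) d"
    using pure_K_half[of 1] pure_K_half[of "-1"] pure_common_faces by auto
  moreover have "?Z = ?K1 \<inter> ?K2 - sc_closure (?K1 - ?K1 \<inter> ?K2)"
    using cut_star_eq[of 1] by simp
  moreover have "?Z = ?K1 \<inter> ?K2 - sc_closure (?K2 - ?K1 \<inter> ?K2)"
    using cut_star_eq[of "-1"] by (simp add: Un_commute Int_commute)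
  ultimately have "strong_connected_sum {0..m} ?K1 ?Z ?K2"
    unfolding strong_connected_sum_def Let_def by blast
  moreover have "K_Delta m lam eta = {\<sigma>\<in>?K1 \<union> ?K2. 0 \<notin> \<sigma>}"
    unfolding K_Delta_eq Poly_eq_Un_Half K_half_eq by blast
  ultimately show ?thesis
    unfolding sc_O_vertex connected_sum_vertex_star by blast
qed

end
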